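(* Let $p>2$, $\mathcal{G}\in\mathbf{G}$, and let $u\in H^1(\mathcal{G})$, $u>0$ on $\mathcal G$, solve $u''+u^{p-1}=\lambda u$ on every edge for some $\lambda\in\mathbb{R}$, with the Kirchhoff condition at every vertex. Then \[ \|u\|_{L^\infty(\mathcal G)}\le\left(\frac p2\lambda+\frac{p\pi^2}{2e_0^2}\right)^{\frac1{p-2}} . \]
   Context: $\mathbf{G}$: connected metric graphs with at most countably many edges, finite vertex degrees and $e_0:=\inf_{e}|e|>0$ (the infimum of the edge lengths). Kirchhoff condition: at each vertex the sum of the outgoing derivatives of $u$ along incident edges is zero. *)

theory Defs
  imports "HOL-Analysis.Analysis"
begin

text \<open>A metric graph: vertex set V, edge set E (countable), each edge e has length
  len e \<in> (0,\<infinity>]. A bounded edge (len e < \<infinity>) is identified with [0, len e]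
  joining src e (at 0) to tgt e (at len e); an unbounded edge (half-line) is [0,\<infinity>)
  attached at src e (at 0).\<close>

definition edge_dom :: "ereal \<Rightarrow> real set" where
  "edge_dom l = {x. 0 \<le> x \<and> ereal x \<le> l}"

definition graph_adj :: "'e set \<Rightarrow> ('e \<Rightarrow> 'v) \<Rightarrow> ('e \<Rightarrow> 'v) \<Rightarrow> ('e \<Rightarrow> ereal) \<Rightarrow> ('v \<times> 'v) set" where
  "graph_adj E src tgt len =
     {(v, w). \<exists>e\<in>E. len e < \<infinity> \<and> ((src e = v \<and> tgt e = w) \<or> (src e = w \<and> tgt e = v))}"

definition metric_graph_G :: "'v set \<Rightarrow> 'e set \<Rightarrow> ('e \<Rightarrow> 'v) \<Rightarrow> ('e \<Rightarrow> 'v) \<Rightarrow> ('e \<Rightarrow> ereal) \<Rightarrow> bool" where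
  "metric_graph_G V E src tgt len \<longleftrightarrow>
     E \<noteq> {} \<and> countable E \<and>
     (\<forall>e\<in>E. 0 < len e \<and> src e \<in> V \<and> (len e < \<infinity> \<longrightarrow> tgt e \<in> V)) \<and>
     (\<forall>v\<in>V. finite {e\<in>E. src e = v} \<and> finite {e\<in>E. len e < \<infinity> \<and> tgt e = v}) \<and>
     (\<forall>v\<in>V. \<forall>w\<in>V. (v, w) \<in> (graph_adj E src tgt len)\<^sup>*) \<and>
     0 < (INF e\<in>E. len e)"

text \<open>Minimal edge length e_0 (possibly \<infinity> if all edges are half-lines).\<close>
definition min_edge_len :: "'e set \<Rightarrow> ('e \<Rightarrow> ereal) \<Rightarrow> ereal" where
  "min_edge_len E len = (INF e\<in>E. len e)"

text \<open>u \<in> H^1(G): on each edge u_e is differentiable (derivative u'_e, one-sided at the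
  endpoints), u is continuous at the vertices, and \<Sum>_e \<integral>_e (u_e^2 + u_e'^2) < \<infinity>.\<close>
definition in_H1 :: "'v set \<Rightarrow> 'e set \<Rightarrow> ('e \<Rightarrow> 'v) \<Rightarrow> ('e \<Rightarrow> 'v) \<Rightarrow> ('e \<Rightarrow> ereal)
    \<Rightarrow> ('e \<Rightarrow> real \<Rightarrow> real) \<Rightarrow> ('e \<Rightarrow> real \<Rightarrow> real) \<Rightarrow> bool" where
  "in_H1 V E src tgt len u u' \<longleftrightarrow>
     (\<forall>e\<in>E. \<forall>x\<in>edge_dom (len e). (u e has_real_derivative u' e x) (at x within edge_dom (len e))) \<and>
     (\<forall>e\<in>E. set_integrable lborel (edge_dom (len e)) (\<lambda>x. (u e x)\<^sup>2 + (u' e x)\<^sup>2)) \<and>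
     (\<lambda>e. LINT x:edge_dom (len e)|lborel. (u e x)\<^sup>2 + (u' e x)\<^sup>2) summable_on E \<and>
     (\<forall>e1\<in>E. \<forall>e2\<in>E.
        (src e1 = src e2 \<longrightarrow> u e1 0 = u e2 0) \<and>
        (len e2 < \<infinity> \<and> src e1 = tgt e2 \<longrightarrow> u e1 0 = u e2 (real_of_ereal (len e2))) \<and>
        (len e1 < \<infinity> \<and> len e2 < \<infinity> \<and> tgt e1 = tgt e2 \<longrightarrow>
             u e1 (real_of_ereal (len e1)) = u e2 (real_of_ereal (len e2))))"

text \<open>At the end 0 of an edge the outgoing derivative is u'_e(0); at the end len e of a
  bounded edge it is -u'_e(len e). A loop contributes both ends.\<close>
definition kirchhoff :: "'v set \<Rightarrow> 'e set \<Rightarrow> ('e \<Rightarrow> 'v) \<Rightarrow> ('e \<Rightarrow> 'v) \<Rightarrow> ('e \<Rightarrow> ereal)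
    \<Rightarrow> ('e \<Rightarrow> real \<Rightarrow> real) \<Rightarrow> bool" where
  "kirchhoff V E src tgt len u' \<longleftrightarrow>
     (\<forall>v\<in>V. (\<Sum>e\<in>{e\<in>E. src e = v}. u' e 0)
            - (\<Sum>e\<in>{e\<in>E. len e < \<infinity> \<and> tgt e = v}. u' e (real_of_ereal (len e))) = 0)"

end

theory Submission
  imports Defs
begin

(* On a single edge the energy (u')^2/2 + F(u), with F(y) = y^p/p - lam y^2/2, is constant.
   If a = u(x0)^(p-2)/p - lam/2 > 0, then F grows at least like a y^2 above u(x0), so u stays
   below the turning level M >= u(x0) where F(M) equals the energy, and (u')^2 >= 2a (M^2 - u^2).
   Comparing with M cos(sqrt(2a) t), a positive u then cannot live on an interval longer than
   pi / sqrt(2a).  Hence e_0 <= pi / sqrt(2a), which rearranges to the bound. *)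

lemma deriv_stays_negative:
  fixes v v' :: "real \<Rightarrow> real" and a b t :: real
  assumes der: "\<And>s. s \<in> {a..b} \<Longrightarrow> (v has_real_derivative v' s) (at s)"
    and cont: "continuous_on {a..b} v'"
    and start: "v' a < 0"
    and nonzero: "\<And>s. s \<in> {a..b} \<Longrightarrow> v s < v a \<Longrightarrow> v' s \<noteq> 0"
    and t: "t \<in> {a..b}"
  shows "v' t < 0"
proof (rule ccontr)
  assume "\<not> v' t < 0"
  have cont_t: "continuous_on {a..t} v'"
    by (rule continuous_on_subset[OF cont]) (use t in auto)
  define Z where "Z = {s \<in> {a..t}. v' s = 0}"
  have "Z \<noteq> {}"
    using IVT'[of v' a 0 t] cont_t start \<open>\<not> v' t < 0\<close> t by (auto simp: Z_def)
  moreover have "compact Z"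
    unfolding Z_def compact_eq_bounded_closed
    using continuous_closed_preimage_constant[OF cont_t] by (auto intro: bounded_subset[of "{a..t}"])
  ultimately obtain t1 where t1: "t1 \<in> Z" and first: "\<And>s. s \<in> Z \<Longrightarrow> t1 \<le> s"
    by (meson compact_attains_inf)
  have t1_bounds: "a \<le> t1" "t1 \<le> t" "v' t1 = 0"
    using t1 by (auto simp: Z_def)
  then have "a < t1"
    using start by (cases "t1 = a") auto
  have neg_before: "v' s < 0" if s: "a \<le> s" "s < t1" for s
  proof (rule ccontr)
    assume "\<not> v' s < 0"
    then obtain z where "a \<le> z" "z \<le> s" "v' z = 0"
      using IVT'[of v' a 0 s] start s continuous_on_subset[OF cont_t, of "{a..s}"] t1_bounds
      by auto
    then show False
      using first[of z] s t1_bounds by (auto simp: Z_def)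
  qed
  obtain \<xi> where "a < \<xi>" "\<xi> < t1" "v t1 - v a = (t1 - a) * v' \<xi>"
    using MVT2[of a t1 v v'] der \<open>a < t1\<close> t1_bounds t by auto
  then have "v t1 < v a"
    using neg_before[of \<xi>] mult_pos_neg[of "t1 - a" "v' \<xi>"] \<open>a < t1\<close> by linarith
  then show False
    using nonzero[of t1] t1_bounds t by auto
qed

lemma arccos_comparison:
  fixes v v' :: "real \<Rightarrow> real" and M \<omega> h :: real
  assumes "0 < M" "0 \<le> \<omega>" "0 \<le> h"
    and der: "\<And>t. t \<in> {0..h} \<Longrightarrow> (v has_real_derivative v' t) (at t)"
    and neg: "\<And>t. t \<in> {0..h} \<Longrightarrow> v' t < 0"
    and lower: "\<And>t. t \<in> {0..h} \<Longrightarrow> - M < v t"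
    and start: "v 0 \<le> M"
    and fast: "\<And>t. t \<in> {0..h} \<Longrightarrow> \<omega>\<^sup>2 * (M\<^sup>2 - (v t)\<^sup>2) \<le> (v' t)\<^sup>2"
  shows "\<omega> * h \<le> arccos (v h / M)"
proof -
  have upper: "v t < M" if "0 < t" "t \<le> h" for t
  proof -
    have "v t < v 0"
      using DERIV_neg_imp_decreasing[of 0 t v] der neg that by (meson atLeastAtMost_iff order_trans)
    then show ?thesis
      using start by linarith
  qed
  define g where "g t = arccos (v t / M) - \<omega> * t" for t
  have "g 0 \<le> g h"
  proof (rule DERIV_nonneg_imp_increasing_open[OF \<open>0 \<le> h\<close>])
    have "continuous_on {0..h} v"
      using der by (meson DERIV_isCont continuous_at_imp_continuous_on)
    moreover have "-1 \<le> v t / M \<and> v t / M \<le> 1" if "t \<in> {0..h}" for t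
      using lower[OF that] upper[of t] start that \<open>0 < M\<close>
      by (cases "t = 0") (auto simp: divide_le_eq le_divide_eq)
    ultimately show "continuous_on {0..h} g"
      unfolding g_def using \<open>0 < M\<close> by (intro continuous_intros) auto
  next
    fix x assume x: "0 < x" "x < h"
    define q where "q = v x / M"
    have q: "-1 < q" "q < 1"
      using lower[of x] upper[of x] x \<open>0 < M\<close> by (auto simp: q_def divide_less_eq less_divide_eq)
    have "((\<lambda>t. v t / M) has_real_derivative v' x / M) (at x)"
      using der[of x] x by (auto intro: DERIV_cdivide)
    then have "((\<lambda>t. arccos (v t / M)) has_real_derivative inverse (- sqrt (1 - q\<^sup>2)) * (v' x / M)) (at x)"
      using DERIV_arccos[OF q] unfolding q_def by (rule DERIV_chain2[rotated])
    then have "(g has_real_derivative inverse (- sqrt (1 - q\<^sup>2)) * (v' x / M) - \<omega>) (at x)"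
      unfolding g_def by (intro DERIV_diff DERIV_cmult_Id)
    moreover have "\<omega> \<le> inverse (- sqrt (1 - q\<^sup>2)) * (v' x / M)"
    proof -
      have "M\<^sup>2 * (1 - q\<^sup>2) = M\<^sup>2 - (v x)\<^sup>2"
        using \<open>0 < M\<close> by (simp add: q_def power_divide right_diff_distrib)
      then have root: "M * sqrt (1 - q\<^sup>2) = sqrt (M\<^sup>2 - (v x)\<^sup>2)"
        using \<open>0 < M\<close> by (metis abs_of_pos real_sqrt_abs real_sqrt_mult)
      have "\<omega> * (M * sqrt (1 - q\<^sup>2)) \<le> - v' x"
        unfolding root
        using real_sqrt_le_mono[OF fast[of x]] neg[of x] x \<open>0 \<le> \<omega>\<close> by (simp add: real_sqrt_mult)
      moreover have "0 < M * sqrt (1 - q\<^sup>2)"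
        using q \<open>0 < M\<close> by (simp add: abs_square_less_1)
      ultimately have "\<omega> \<le> - v' x / (M * sqrt (1 - q\<^sup>2))"
        by (rule pos_le_divide_eq[THEN iffD2, rotated])
      moreover have "inverse (- sqrt (1 - q\<^sup>2)) * (v' x / M) = - v' x / (M * sqrt (1 - q\<^sup>2))"
        by (simp add: field_simps)
      ultimately show ?thesis
        by simp
    qed
    ultimately show "\<exists>y. (g has_real_derivative y) (at x) \<and> 0 \<le> y"
      by force
  qed
  moreover have "0 \<le> arccos (v 0 / M)"
    using lower[of 0] start \<open>0 < M\<close> \<open>0 \<le> h\<close> by (intro arccos_lbound) (auto simp: divide_le_eq le_divide_eq)
  ultimately show ?thesis
    unfolding g_def by simp
qed

(* v' cannot vanish while v < M, so v decreases; then arccos (v / M) grows at least at rate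
   \<omega> and v would reach 0 by time h. *)
lemma no_positive_descent_over_quarter_period:
  fixes v v' :: "real \<Rightarrow> real" and M \<omega> h :: real
  assumes "0 < \<omega>" "0 < M" "\<omega> * h = pi / 2"
    and der: "\<And>t. t \<in> {0..h} \<Longrightarrow> (v has_real_derivative v' t) (at t)"
    and cont: "continuous_on {0..h} v'"
    and pos: "\<And>t. t \<in> {0..h} \<Longrightarrow> 0 < v t"
    and bounded: "\<And>t. t \<in> {0..h} \<Longrightarrow> v t \<le> M"
    and start: "v' 0 < 0"
    and fast: "\<And>t. t \<in> {0..h} \<Longrightarrow> \<omega>\<^sup>2 * (M\<^sup>2 - (v t)\<^sup>2) \<le> (v' t)\<^sup>2"
  shows False
proof -
  have "0 < h"
    using zero_less_mult_pos[of \<omega> h] pi_half_gt_zero assms(1,3) by simp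
  have neg: "v' t < 0" if "t \<in> {0..h}" for t
  proof (rule deriv_stays_negative[OF der cont start _ that])
    fix s assume s: "s \<in> {0..h}" "v s < v 0"
    then have "(v s)\<^sup>2 < M\<^sup>2"
      using pos[of s] bounded[of 0] \<open>0 < h\<close> by (intro power_strict_mono) auto
    then have "0 < \<omega>\<^sup>2 * (M\<^sup>2 - (v s)\<^sup>2)"
      using \<open>0 < \<omega>\<close> by simp
    then show "v' s \<noteq> 0"
      using fast[OF s(1)] by auto
  qed
  have "pi / 2 \<le> arccos (v h / M)"
    using arccos_comparison[OF \<open>0 < M\<close> _ _ der neg _ _ fast] assms(1,3) \<open>0 < h\<close> pos bounded
    by (smt (verit) atLeastAtMost_iff)
  moreover have "arccos (v h / M) < arccos 0"
    using pos[of h] bounded[of h] \<open>0 < h\<close> \<open>0 < M\<close> by (intro arccos_less_arccos) auto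
  ultimately show False
    by simp
qed

definition nls_potential :: "real \<Rightarrow> real \<Rightarrow> real \<Rightarrow> real" where
  "nls_potential p lam y = y powr p / p - lam * y\<^sup>2 / 2"

lemma nls_potential_has_real_derivative:
  assumes "p \<noteq> 0" "0 < y"
  shows "(nls_potential p lam has_real_derivative y powr (p - 1) - lam * y) (at y)"
proof -
  have "(nls_potential p lam has_real_derivative p * y powr (p - 1) / p - lam * (2 * y) / 2) (at y)"
    unfolding nls_potential_def
    by (intro DERIV_diff DERIV_cdivide has_real_derivative_powr \<open>0 < y\<close>) (auto intro!: derivative_eq_intros)
  then show ?thesis
    using \<open>p \<noteq> 0\<close> by simp
qed

lemma nls_energy_constant:
  fixes I :: "real set" and u u' :: "real \<Rightarrow> real" and p lam :: real
  assumes "p \<noteq> 0" "convex I"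
    and du: "\<And>x. x \<in> I \<Longrightarrow> (u has_real_derivative u' x) (at x)"
    and ddu: "\<And>x. x \<in> I \<Longrightarrow> (u' has_real_derivative lam * u x - u x powr (p - 1)) (at x)"
    and pos: "\<And>x. x \<in> I \<Longrightarrow> 0 < u x"
  obtains C where "\<And>x. x \<in> I \<Longrightarrow> (u' x)\<^sup>2 / 2 + nls_potential p lam (u x) = C"
proof -
  have "((\<lambda>x. (u' x)\<^sup>2 / 2 + nls_potential p lam (u x)) has_real_derivative 0) (at x within I)"
    if x: "x \<in> I" for x
  proof -
    have "((\<lambda>x. (u' x)\<^sup>2 / 2 + nls_potential p lam (u x)) has_real_derivative
        2 * u' x * (lam * u x - u x powr (p - 1)) / 2 + (u x powr (p - 1) - lam * u x) * u' x) (at x)"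
      using ddu[OF x] DERIV_chain2[OF nls_potential_has_real_derivative[OF \<open>p \<noteq> 0\<close> pos[OF x]] du[OF x]]
      by (auto intro!: derivative_eq_intros)
    moreover have "2 * u' x * (lam * u x - u x powr (p - 1)) / 2 + (u x powr (p - 1) - lam * u x) * u' x = 0"
      by (simp add: field_simps)
    ultimately show ?thesis
      by (metis has_field_derivative_at_within)
  qed
  then show ?thesis
    using has_field_derivative_zero_constant[OF \<open>convex I\<close>] that by blast
qed

lemma nls_potential_diff_ge:
  fixes p lam m X Y :: real
  assumes "2 < p" "0 < Y" "Y \<le> X" "0 < m" "m \<le> X"
  shows "(m powr (p - 2) / p - lam / 2) * (X\<^sup>2 - Y\<^sup>2) \<le> nls_potential p lam X - nls_potential p lam Y"
proof -
  have split: "Z powr p = Z powr (p - 2) * Z\<^sup>2" if "0 < Z" for Z :: real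
    using that powr_add[of Z "p - 2" 2] by simp
  have "m powr (p - 2) * (X\<^sup>2 - Y\<^sup>2) \<le> X powr (p - 2) * (X\<^sup>2 - Y\<^sup>2)"
    using assms by (intro mult_right_mono powr_mono2) (auto simp: power_mono)
  also have "\<dots> \<le> X powr (p - 2) * X\<^sup>2 - Y powr (p - 2) * Y\<^sup>2"
    using powr_mono2[of "p - 2" Y X] assms mult_right_mono[of "Y powr (p - 2)" "X powr (p - 2)" "Y\<^sup>2"]
    by (simp add: algebra_simps)
  also have "\<dots> = X powr p - Y powr p"
    using assms split[of X] split[of Y] by simp
  finally have "m powr (p - 2) * (X\<^sup>2 - Y\<^sup>2) / p \<le> (X powr p - Y powr p) / p"
    using assms by (intro divide_right_mono) auto
  then show ?thesis
    unfolding nls_potential_def by (simp add: algebra_simps diff_divide_distrib)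
qed

lemma nls_potential_reaches_level:
  fixes p lam m C :: real
  assumes "2 < p" "0 < m" and a_pos: "0 < m powr (p - 2) / p - lam / 2"
    and below: "nls_potential p lam m \<le> C"
  obtains M where "m \<le> M" "nls_potential p lam M = C"
proof -
  define a where "a = m powr (p - 2) / p - lam / 2"
  define R where "R = m + sqrt ((C - nls_potential p lam m) / a)"
  have "m \<le> R"
    using below a_pos by (simp add: R_def a_def)
  have "C - nls_potential p lam m = a * (R - m)\<^sup>2"
    using below a_pos by (simp add: R_def a_def)
  also have "\<dots> \<le> a * (R\<^sup>2 - m\<^sup>2)"
    using \<open>m \<le> R\<close> \<open>0 < m\<close> a_pos by (intro mult_left_mono) (auto simp: a_def power2_eq_square algebra_simps)
  also have "\<dots> \<le> nls_potential p lam R - nls_potential p lam m"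
    unfolding a_def using assms \<open>m \<le> R\<close> by (intro nls_potential_diff_ge) auto
  finally have "C \<le> nls_potential p lam R"
    by simp
  moreover have "continuous_on {m..R} (nls_potential p lam)"
    unfolding nls_potential_def using \<open>0 < m\<close> \<open>2 < p\<close> by (intro continuous_intros) auto
  ultimately show ?thesis
    using IVT'[of "nls_potential p lam" m C R] below \<open>m \<le> R\<close> that by auto
qed

lemma no_positive_run_over_quarter_period:
  fixes I :: "real set" and u u' :: "real \<Rightarrow> real" and M \<omega> h s c :: real
  assumes "0 < \<omega>" "0 < M" "\<omega> * h = pi / 2" and s: "s \<in> {-1, 1}"
    and inI: "\<And>t. t \<in> {0..h} \<Longrightarrow> c + s * t \<in> I"
    and du: "\<And>x. x \<in> I \<Longrightarrow> (u has_real_derivative u' x) (at x)"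
    and cont: "\<And>x. x \<in> I \<Longrightarrow> isCont u' x"
    and pos: "\<And>x. x \<in> I \<Longrightarrow> 0 < u x"
    and bounded: "\<And>x. x \<in> I \<Longrightarrow> u x \<le> M"
    and fast: "\<And>x. x \<in> I \<Longrightarrow> \<omega>\<^sup>2 * (M\<^sup>2 - (u x)\<^sup>2) \<le> (u' x)\<^sup>2"
    and start: "s * u' c < 0"
  shows False
proof (rule no_positive_descent_over_quarter_period[OF \<open>0 < \<omega>\<close> \<open>0 < M\<close> \<open>\<omega> * h = pi / 2\<close>,
      of "\<lambda>t. u (c + s * t)" "\<lambda>t. s * u' (c + s * t)"])
  have shift: "((\<lambda>t. c + s * t) has_real_derivative s) (at t)" for t
    by (auto intro!: derivative_eq_intros)
  fix t assume t: "t \<in> {0..h}"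
  show "((\<lambda>t. u (c + s * t)) has_real_derivative s * u' (c + s * t)) (at t)"
    using DERIV_chain2[OF du[OF inI[OF t]] shift] by (simp add: mult.commute)
  show "0 < u (c + s * t)" "u (c + s * t) \<le> M"
    using pos bounded inI[OF t] by auto
  show "\<omega>\<^sup>2 * (M\<^sup>2 - (u (c + s * t))\<^sup>2) \<le> (s * u' (c + s * t))\<^sup>2"
    using fast[OF inI[OF t]] s by (auto simp: power_mult_distrib)
next
  show "s * u' (c + s * 0) < 0"
    using start by simp
next
  have "isCont (\<lambda>t. u' (c + s * t)) t" if "t \<in> {0..h}" for t
    by (rule isCont_o2[where f = "\<lambda>t. c + s * t"]) (use cont inI that in auto)
  then show "continuous_on {0..h} (\<lambda>t. s * u' (c + s * t))"
    by (intro continuous_at_imp_continuous_on continuous_intros) auto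
qed

lemma nls_oscillation_length_bound:
  fixes I :: "real set" and u u' :: "real \<Rightarrow> real" and p lam M \<omega> L :: real
  assumes "0 < \<omega>" "0 < M" "lam < M powr (p - 2)"
    and du: "\<And>x. x \<in> I \<Longrightarrow> (u has_real_derivative u' x) (at x)"
    and ddu: "\<And>x. x \<in> I \<Longrightarrow> (u' has_real_derivative lam * u x - u x powr (p - 1)) (at x)"
    and pos: "\<And>x. x \<in> I \<Longrightarrow> 0 < u x"
    and bounded: "\<And>x. x \<in> I \<Longrightarrow> u x \<le> M"
    and fast: "\<And>x. x \<in> I \<Longrightarrow> \<omega>\<^sup>2 * (M\<^sup>2 - (u x)\<^sup>2) \<le> (u' x)\<^sup>2"
    and sub: "{0<..<L} \<subseteq> I"
  shows "L \<le> pi / \<omega>"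
proof (rule ccontr)
  assume "\<not> L \<le> pi / \<omega>"
  define h where "h = pi / (2 * \<omega>)"
  have "0 < h" "\<omega> * h = pi / 2" "2 * h < L"
    using \<open>0 < \<omega>\<close> \<open>\<not> L \<le> pi / \<omega>\<close> by (auto simp: h_def)
  have cont: "isCont u' x" if "x \<in> I" for x
    using ddu[OF that] by (rule DERIV_isCont)
  have critical: "u' c = 0" if c: "h < c" "c + h < L" for c
  proof (rule ccontr)
    assume "u' c \<noteq> 0"
    then obtain s :: real where s: "s \<in> {-1, 1}" "s * u' c < 0"
      by (cases "u' c < 0") (auto intro: that[of 1] that[of "-1"])
    show False
    proof (rule no_positive_run_over_quarter_period[OF \<open>0 < \<omega>\<close> \<open>0 < M\<close> \<open>\<omega> * h = pi / 2\<close> s(1) _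
          du cont pos bounded fast s(2)])
      fix t assume "t \<in> {0..h}"
      then show "c + s * t \<in> I"
        using sub s c by auto
    qed
  qed
  define c where "c = L / 2"
  have "c \<in> I" "h < c" "c + h < L"
    using sub \<open>0 < h\<close> \<open>2 * h < L\<close> by (auto simp: c_def)
  have "M \<le> u c"
  proof (rule power2_le_imp_le)
    show "M\<^sup>2 \<le> (u c)\<^sup>2"
      using fast[OF \<open>c \<in> I\<close>] critical[OF \<open>h < c\<close> \<open>c + h < L\<close>] \<open>0 < \<omega>\<close> by (simp add: mult_le_0_iff)
  qed (use pos[OF \<open>c \<in> I\<close>] in simp)
  then have "u c = M"
    using bounded[OF \<open>c \<in> I\<close>] by simp
  \<comment> \<open>Hence u'' c < 0, so u' turns negative right after c, although it vanishes on (h, L - h).\<close>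
  have "M powr (p - 1) = M powr (p - 2) * M"
    using powr_add[of M "p - 2" 1] \<open>0 < M\<close> by simp
  then have "lam * u c - u c powr (p - 1) < 0"
    using \<open>u c = M\<close> \<open>lam < M powr (p - 2)\<close> \<open>0 < M\<close> by (simp add: mult_strict_right_mono)
  then obtain d where "0 < d" and decreasing: "\<And>t. 0 < t \<Longrightarrow> t < d \<Longrightarrow> u' (c + t) < u' c"
    using DERIV_neg_dec_right[OF ddu[OF \<open>c \<in> I\<close>]] by blast
  define t where "t = min d (c - h) / 2"
  have "0 < t" "t < d" "t < c - h"
    using \<open>0 < d\<close> \<open>h < c\<close> by (auto simp: t_def min_def)
  moreover have "L = 2 * c"
    by (simp add: c_def)
  ultimately show False
    using decreasing[of t] critical[of c] critical[of "c + t"] \<open>h < c\<close> by simp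
qed

lemma nls_solution_below_turning_level:
  fixes I :: "real set" and u u' :: "real \<Rightarrow> real" and p lam x0 :: real
  assumes "2 < p" "convex I"
    and cont: "continuous_on (closure I) u"
    and du: "\<And>x. x \<in> I \<Longrightarrow> (u has_real_derivative u' x) (at x)"
    and ddu: "\<And>x. x \<in> I \<Longrightarrow> (u' has_real_derivative lam * u x - u x powr (p - 1)) (at x)"
    and pos: "\<And>x. x \<in> closure I \<Longrightarrow> 0 < u x"
    and x0: "x0 \<in> closure I"
    and a_pos: "0 < u x0 powr (p - 2) / p - lam / 2"
  obtains M where "u x0 \<le> M" "\<And>x. x \<in> I \<Longrightarrow> u x \<le> M"
    "\<And>x. x \<in> I \<Longrightarrow> (u x0 powr (p - 2) / p - lam / 2) * (M\<^sup>2 - (u x)\<^sup>2) \<le> (u' x)\<^sup>2 / 2"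
proof -
  define a where "a = u x0 powr (p - 2) / p - lam / 2"
  let ?F = "nls_potential p lam"
  have "p \<noteq> 0"
    using \<open>2 < p\<close> by simp
  have posI: "\<And>x. x \<in> I \<Longrightarrow> 0 < u x"
    using pos closure_subset by blast
  obtain C where energy: "\<And>x. x \<in> I \<Longrightarrow> (u' x)\<^sup>2 / 2 + ?F (u x) = C"
    using nls_energy_constant[OF \<open>p \<noteq> 0\<close> \<open>convex I\<close> du ddu posI] by blast
  have below: "?F (u x) \<le> C" if "x \<in> closure I" for x
  proof (rule continuous_le_on_closure[OF _ that])
    show "continuous_on (closure I) (\<lambda>x. ?F (u x))"
      unfolding nls_potential_def using \<open>p \<noteq> 0\<close> by (intro continuous_intros cont) (auto dest: pos)
  next
    fix y assume "y \<in> I"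
    then show "?F (u y) \<le> C"
      using energy[of y] zero_le_power2[of "u' y"] by linarith
  qed
  obtain M where "u x0 \<le> M" and level: "?F M = C"
    using nls_potential_reaches_level[OF \<open>2 < p\<close> pos[OF x0] a_pos below[OF x0]] by blast
  have "0 < M"
    using pos[OF x0] \<open>u x0 \<le> M\<close> by simp
  have diff: "a * (X\<^sup>2 - Y\<^sup>2) \<le> ?F X - ?F Y" if "0 < Y" "Y \<le> X" "u x0 \<le> X" for X Y
    unfolding a_def using \<open>2 < p\<close> pos[OF x0] that by (intro nls_potential_diff_ge) auto
  have bounded: "u x \<le> M" if "x \<in> I" for x
  proof (rule ccontr)
    assume "\<not> u x \<le> M"
    then have "0 < a * ((u x)\<^sup>2 - M\<^sup>2)"
      using a_pos \<open>0 < M\<close> by (simp add: a_def power_strict_mono)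
    also have "\<dots> \<le> ?F (u x) - ?F M"
      using diff[of M "u x"] \<open>0 < M\<close> \<open>u x0 \<le> M\<close> \<open>\<not> u x \<le> M\<close> by simp
    finally show False
      using below[of x] level closure_subset that by auto
  qed
  have "a * (M\<^sup>2 - (u x)\<^sup>2) \<le> (u' x)\<^sup>2 / 2" if "x \<in> I" for x
    using diff[of "u x" M] energy[OF that] level posI[OF that] bounded[OF that] \<open>u x0 \<le> M\<close> by simp
  then show ?thesis
    using that[OF \<open>u x0 \<le> M\<close> bounded] unfolding a_def by blast
qed

lemma nls_solution_interval_length_bound:
  fixes I :: "real set" and u u' :: "real \<Rightarrow> real" and p lam x0 L :: real
  assumes "2 < p" "convex I"
    and cont: "continuous_on (closure I) u"
    and du: "\<And>x. x \<in> I \<Longrightarrow> (u has_real_derivative u' x) (at x)"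
    and ddu: "\<And>x. x \<in> I \<Longrightarrow> (u' has_real_derivative lam * u x - u x powr (p - 1)) (at x)"
    and pos: "\<And>x. x \<in> closure I \<Longrightarrow> 0 < u x"
    and x0: "x0 \<in> closure I"
    and a_pos: "0 < u x0 powr (p - 2) / p - lam / 2"
    and sub: "{0<..<L} \<subseteq> I"
  shows "L \<le> pi / sqrt (2 * (u x0 powr (p - 2) / p - lam / 2))"
proof -
  define a where "a = u x0 powr (p - 2) / p - lam / 2"
  obtain M where "u x0 \<le> M" and bounded: "\<And>x. x \<in> I \<Longrightarrow> u x \<le> M"
    and fast: "\<And>x. x \<in> I \<Longrightarrow> a * (M\<^sup>2 - (u x)\<^sup>2) \<le> (u' x)\<^sup>2 / 2"
    using nls_solution_below_turning_level[OF assms(1-8)] unfolding a_def by blast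
  have "(sqrt (2 * a))\<^sup>2 = 2 * a"
    using a_pos by (simp flip: a_def)
  then have fast': "(sqrt (2 * a))\<^sup>2 * (M\<^sup>2 - (u x)\<^sup>2) \<le> (u' x)\<^sup>2" if "x \<in> I" for x
    using fast[OF that] by (simp only: mult.assoc)
  have "lam < u x0 powr (p - 2)"
  proof (cases "0 < lam")
    case True
    then have "lam < p * lam / 2"
      using \<open>2 < p\<close> by simp
    also have "\<dots> < u x0 powr (p - 2)"
      using a_pos \<open>2 < p\<close> by (simp add: field_simps)
    finally show ?thesis .
  next
    case False
    then show ?thesis
      using pos[OF x0] by (smt (verit) powr_gt_zero)
  qed
  also have "\<dots> \<le> M powr (p - 2)"
    using \<open>u x0 \<le> M\<close> pos[OF x0] \<open>2 < p\<close> by (intro powr_mono2) auto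
  finally have "lam < M powr (p - 2)" .
  moreover have "0 < sqrt (2 * a)"
    using a_pos by (simp flip: a_def)
  moreover have "0 < M"
    using pos[OF x0] \<open>u x0 \<le> M\<close> by simp
  moreover have "\<And>x. x \<in> I \<Longrightarrow> 0 < u x"
    using pos closure_subset by blast
  ultimately show ?thesis
    using nls_oscillation_length_bound[OF _ _ _ du ddu _ bounded fast' sub] by (simp add: a_def)
qed

lemma nls_edge_length_bound:
  fixes l :: ereal and u u' :: "real \<Rightarrow> real" and p lam x0 :: real
  assumes "2 < p" "0 < l"
    and du: "\<forall>x\<in>edge_dom l. (u has_real_derivative u' x) (at x within edge_dom l)"
    and ddu: "\<forall>x\<in>edge_dom l. 0 < x \<and> ereal x < l \<longrightarrow>
           (u' has_real_derivative (lam * u x - u x powr (p - 1))) (at x)"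
    and pos: "\<forall>x\<in>edge_dom l. 0 < u x"
    and x0: "x0 \<in> edge_dom l"
    and a_pos: "0 < u x0 powr (p - 2) / p - lam / 2"
  shows "l \<le> ereal (pi / sqrt (2 * (u x0 powr (p - 2) / p - lam / 2)))"
proof -
  define I where "I = {x. 0 < x \<and> ereal x < l}"
  have "open I \<and> convex I \<and> edge_dom l = closure I"
  proof (cases l)
    case (real r)
    then have "I = {0<..<r}" "edge_dom l = {0..r}" "0 < r"
      using \<open>0 < l\<close> by (auto simp: I_def edge_dom_def)
    then show ?thesis
      by auto
  next
    case PInf
    then have "I = {0<..}" "edge_dom l = {0..}"
      by (auto simp: I_def edge_dom_def)
    then show ?thesis
      by auto
  qed (use \<open>0 < l\<close> in simp)
  then have I: "open I" "convex I" "edge_dom l = closure I"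
    by auto
  have "I \<subseteq> edge_dom l"
    by (auto simp: I_def edge_dom_def)
  have du_I: "(u has_real_derivative u' x) (at x)" if "x \<in> I" for x
  proof -
    have "(u has_real_derivative u' x) (at x within edge_dom l)"
      using du that \<open>I \<subseteq> edge_dom l\<close> by auto
    then show ?thesis
      using at_within_open_subset[OF that \<open>open I\<close> \<open>I \<subseteq> edge_dom l\<close>] by simp
  qed
  have cont: "continuous_on (closure I) u"
    using du unfolding I(3)[symmetric] by (intro DERIV_continuous_on) auto
  have interval_bound: "L \<le> pi / sqrt (2 * (u x0 powr (p - 2) / p - lam / 2))" if "ereal L \<le> l" for L
  proof (rule nls_solution_interval_length_bound[OF \<open>2 < p\<close> \<open>convex I\<close> cont du_I _ _ _ a_pos])
    show "(u' has_real_derivative lam * u x - u x powr (p - 1)) (at x)" if "x \<in> I" for x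
      using ddu that \<open>I \<subseteq> edge_dom l\<close> by (auto simp: I_def)
    show "0 < u x" if "x \<in> closure I" for x
      using pos that unfolding I(3)[symmetric] by blast
    show "x0 \<in> closure I"
      using x0 unfolding I(3)[symmetric] .
    show "{0<..<L} \<subseteq> I"
    proof
      fix x assume "x \<in> {0<..<L}"
      then have "0 < x" "ereal x < ereal L"
        by auto
      then show "x \<in> I"
        using less_le_trans[of "ereal x" "ereal L" l] that unfolding I_def by simp
    qed
  qed
  show ?thesis
  proof (rule ccontr)
    assume "\<not> l \<le> ereal (pi / sqrt (2 * (u x0 powr (p - 2) / p - lam / 2)))"
    then obtain L where "pi / sqrt (2 * (u x0 powr (p - 2) / p - lam / 2)) < L" "ereal L < l"
      using ereal_dense2 not_le ereal_less_eq(3) by (metis less_ereal.simps(1))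
    then show False
      using interval_bound[of L] by (simp add: less_imp_le)
  qed
qed

lemma amplitude_bound_of_length_bound:
  fixes m p lam :: real and e0 :: ereal
  assumes "0 < p" "0 < e0"
    and length_bound: "0 < m / p - lam / 2 \<Longrightarrow> e0 \<le> ereal (pi / sqrt (2 * (m / p - lam / 2)))"
  shows "m \<le> p / 2 * lam + (if e0 = \<infinity> then 0 else p * pi\<^sup>2 / (2 * (real_of_ereal e0)\<^sup>2))"
proof (cases "0 < m / p - lam / 2")
  case False
  then have "m \<le> p / 2 * lam"
    using \<open>0 < p\<close> by (simp add: field_simps)
  moreover have "0 \<le> p * pi\<^sup>2 / (2 * (real_of_ereal e0)\<^sup>2)"
    using \<open>0 < p\<close> by simp
  ultimately show ?thesis
    by simp
next
  case True
  define a where "a = m / p - lam / 2"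
  have "0 < a"
    using True by (simp add: a_def)
  obtain r where r: "e0 = ereal r" "0 < r" "r \<le> pi / sqrt (2 * a)"
    using length_bound[OF True] \<open>0 < e0\<close> unfolding a_def[symmetric] by (cases e0) auto
  then have "r * sqrt (2 * a) \<le> pi"
    using \<open>0 < a\<close> by (simp add: pos_le_divide_eq)
  then have "(r * sqrt (2 * a))\<^sup>2 \<le> pi\<^sup>2"
    using \<open>0 < a\<close> \<open>0 < r\<close> by (intro power_mono) auto
  then have "r\<^sup>2 * (2 * a) \<le> pi\<^sup>2"
    using \<open>0 < a\<close> by (simp add: power_mult_distrib)
  then have "a \<le> pi\<^sup>2 / (2 * r\<^sup>2)"
    using \<open>0 < r\<close> by (simp add: field_simps)
  then show ?thesis
    using r \<open>0 < p\<close> by (simp add: a_def field_simps)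
qed

lemma nls_edge_powr_bound:
  fixes l e0 :: ereal and u u' :: "real \<Rightarrow> real" and p lam x0 :: real
  assumes "2 < p" "0 < e0" "e0 \<le> l"
    and du: "\<forall>x\<in>edge_dom l. (u has_real_derivative u' x) (at x within edge_dom l)"
    and ddu: "\<forall>x\<in>edge_dom l. 0 < x \<and> ereal x < l \<longrightarrow>
           (u' has_real_derivative (lam * u x - u x powr (p - 1))) (at x)"
    and pos: "\<forall>x\<in>edge_dom l. 0 < u x"
    and x0: "x0 \<in> edge_dom l"
  shows "u x0 powr (p - 2)
    \<le> p / 2 * lam + (if e0 = \<infinity> then 0 else p * pi\<^sup>2 / (2 * (real_of_ereal e0)\<^sup>2))"
proof (rule amplitude_bound_of_length_bound[OF _ \<open>0 < e0\<close>])
  assume "0 < u x0 powr (p - 2) / p - lam / 2"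
  moreover have "0 < l"
    using \<open>0 < e0\<close> \<open>e0 \<le> l\<close> by simp
  ultimately have "l \<le> ereal (pi / sqrt (2 * (u x0 powr (p - 2) / p - lam / 2)))"
    using nls_edge_length_bound[OF \<open>2 < p\<close> _ du ddu pos x0] by blast
  then show "e0 \<le> ereal (pi / sqrt (2 * (u x0 powr (p - 2) / p - lam / 2)))"
    using \<open>e0 \<le> l\<close> by simp
qed (use \<open>2 < p\<close> in simp)

theorem lemma2p5:
  fixes V :: "'v set" and E :: "'e set" and src tgt :: "'e \<Rightarrow> 'v" and len :: "'e \<Rightarrow> ereal"
    and u u' :: "'e \<Rightarrow> real \<Rightarrow> real" and p lam :: real
  assumes "p > 2"
    and "metric_graph_G V E src tgt len"
    and "in_H1 V E src tgt len u u'"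
    and "\<forall>e\<in>E. \<forall>x\<in>edge_dom (len e). u e x > 0"
    and "\<forall>e\<in>E. \<forall>x\<in>edge_dom (len e). 0 < x \<and> ereal x < len e \<longrightarrow>
           (u' e has_real_derivative (lam * u e x - u e x powr (p - 1))) (at x)"
    and "kirchhoff V E src tgt len u'"
  shows "(SUP e\<in>E. SUP x\<in>edge_dom (len e). ereal \<bar>u e x\<bar>)
         \<le> ereal ((p / 2 * lam + (if min_edge_len E len = \<infinity> then 0
                    else p * pi\<^sup>2 / (2 * (real_of_ereal (min_edge_len E len))\<^sup>2)))
                  powr (1 / (p - 2)))"
proof (intro SUP_least)
  fix e x assume e: "e \<in> E" and x: "x \<in> edge_dom (len e)"
  define e0 where "e0 = min_edge_len E len"
  define B where "B = p / 2 * lam + (if e0 = \<infinity> then 0 else p * pi\<^sup>2 / (2 * (real_of_ereal e0)\<^sup>2))"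
  have "0 < e0" "e0 \<le> len e"
    using assms(2) e by (auto simp: e0_def min_edge_len_def metric_graph_G_def intro: INF_lower)
  moreover have "\<forall>x\<in>edge_dom (len e). (u e has_real_derivative u' e x) (at x within edge_dom (len e))"
    using assms(3) e by (simp add: in_H1_def)
  ultimately have "u e x powr (p - 2) \<le> B"
    unfolding B_def using nls_edge_powr_bound[OF assms(1)] assms(4,5) e x by blast
  moreover have "0 < u e x"
    using assms(4) e x by blast
  ultimately have "u e x \<le> B powr (1 / (p - 2))"
    using assms(1) powr_mono2[of "1 / (p - 2)" "u e x powr (p - 2)" B] by (simp add: powr_powr)
  then show "ereal \<bar>u e x\<bar> \<le> ereal ((p / 2 * lam + (if min_edge_len E len = \<infinity> then 0
      else p * pi\<^sup>2 / (2 * (real_of_ereal (min_edge_len E len))\<^sup>2))) powr (1 / (p - 2)))"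
    using \<open>0 < u e x\<close> unfolding B_def e0_def by simp
qed

end
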